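(* For any $\mu\in\mathbb F^\times$, the elements $\prod_{i=0}^{d'-1}(A-\mu q^{2i}-\mu^{-1}q^{-2i})$, $\prod_{i=0}^{d'-1}(B-\mu q^{2i}-\mu^{-1}q^{-2i})$ and $\prod_{i=0}^{d'-1}(C-\mu q^{2i}-\mu^{-1}q^{-2i})$ are central in $\triangle_q$.
   Context: $\mathbb F$ is an algebraically closed field and $q\in\mathbb F^\times$ a root of unity of order $d\notin\{1,2,4\}$; $d'=d$ if $d$ odd, $d'=d/2$ if $d$ even. $\triangle_q$ is the unital associative $\mathbb F$-algebra with generators $A,B,C$ subject to the relations that each of $A+\frac{qBC-q^{-1}CB}{q^2-q^{-2}}$, $B+\frac{qCA-q^{-1}AC}{q^2-q^{-2}}$, $C+\frac{qAB-q^{-1}BA}{q^2-q^{-2}}$ is central. *)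

theory Defs
  imports "HOL-Computational_Algebra.Polynomial"
begin

definition alg_closed :: "'f::field itself \<Rightarrow> bool" where
  "alg_closed _ \<longleftrightarrow> (\<forall>p::'f poly. degree p > 0 \<longrightarrow> (\<exists>x. poly p x = 0))"

text \<open>A unital associative F-algebra structure on a ring 'r: a unital ring
  homomorphism from F into the centre of 'r.\<close>
definition alg_emb :: "('f::field \<Rightarrow> 'r::ring_1) \<Rightarrow> bool" where
  "alg_emb emb \<longleftrightarrow> emb 1 = 1 \<and> (\<forall>x y. emb (x + y) = emb x + emb y)
     \<and> (\<forall>x y. emb (x * y) = emb x * emb y) \<and> (\<forall>x r. emb x * r = r * emb x)"

inductive_set gen_alg :: "('f::field \<Rightarrow> 'r::ring_1) \<Rightarrow> 'r \<Rightarrow> 'r \<Rightarrow> 'r \<Rightarrow> 'r set"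
  for emb a b c where
  scal: "emb x \<in> gen_alg emb a b c"
| gen_a: "a \<in> gen_alg emb a b c"
| gen_b: "b \<in> gen_alg emb a b c"
| gen_c: "c \<in> gen_alg emb a b c"
| add: "x \<in> gen_alg emb a b c \<Longrightarrow> y \<in> gen_alg emb a b c \<Longrightarrow> x + y \<in> gen_alg emb a b c"
| mult: "x \<in> gen_alg emb a b c \<Longrightarrow> y \<in> gen_alg emb a b c \<Longrightarrow> x * y \<in> gen_alg emb a b c"

definition central_in :: "'r::ring_1 set \<Rightarrow> 'r \<Rightarrow> bool" where
  "central_in S x \<longleftrightarrow> (\<forall>y\<in>S. x * y = y * x)"

end

theory Submission
  imports Defs
begin

(* Put J x = x + 1/x and w = q^2, a primitive d'-th root of unity, and let
   F t = prod_{i<d'} (t - J (mu w^i)); the three elements are F A, F B and F C.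
   Since prod_{i<n} (x - mu w^i) = x^n - mu^n, we get F (J x) = J (x^d') - J (mu^d') and thus
   F (J x) - F (J y) = prod_i (J x - J (y w^i)). Pairing the factors i and d' - i shows that,
   as polynomials in l and r, F l - F r is a multiple of (l - r) P(l, r), where
   P(l, r) = l^2 + r^2 - J(w) l r + J(w)^2 - 4; it suffices to check this at the points
   l = J x, r = J y, which are all points since the field is algebraically closed.
   Now let l and r act on the algebra as left and right multiplication by A. The defining
   relations write P(l, r) B in terms of the central elements attached to B and C, so it
   commutes with A: (l - r) P(l, r) kills B. Hence F l - F r kills B, i.e. F A commutes
   with B; likewise with C, and trivially with A. Cyclic symmetry of the relations gives
   the claims for B and C. *)

section \<open>Roots of unity and the Joukowski map\<close>

definition joukowski :: "'a::field \<Rightarrow> 'a" where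
  "joukowski x = x + inverse x"

definition primitive_root_of_unity :: "'a::monoid_mult \<Rightarrow> nat \<Rightarrow> bool" where
  "primitive_root_of_unity w n \<longleftrightarrow> 0 < n \<and> w ^ n = 1 \<and> (\<forall>k. 0 < k \<and> k < n \<longrightarrow> w ^ k \<noteq> 1)"

lemma primitive_root_of_unity_power_eq_1_iff:
  assumes "primitive_root_of_unity w n"
  shows "w ^ k = 1 \<longleftrightarrow> n dvd k"
proof -
  have n: "0 < n" and wn: "w ^ n = 1"
    using assms by (simp_all add: primitive_root_of_unity_def)
  have "w ^ k = w ^ (n * (k div n) + k mod n)"
    by simp
  also have "\<dots> = (w ^ n) ^ (k div n) * w ^ (k mod n)"
    by (simp only: power_add power_mult)
  also have "\<dots> = w ^ (k mod n)"
    by (simp add: wn)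
  finally have "w ^ k = w ^ (k mod n)" .
  moreover have "w ^ (k mod n) = 1 \<longleftrightarrow> k mod n = 0"
    using assms n by (cases "k mod n = 0") (simp_all add: primitive_root_of_unity_def)
  ultimately show ?thesis
    by (simp add: dvd_eq_mod_eq_0)
qed

lemma primitive_root_of_unityI:
  assumes "0 < n" and "\<And>k. w ^ k = 1 \<longleftrightarrow> n dvd k"
  shows "primitive_root_of_unity w n"
  using assms unfolding primitive_root_of_unity_def by (auto dest: dvd_imp_le)

lemma primitive_root_of_unity_square:
  assumes "primitive_root_of_unity q d"
  shows "primitive_root_of_unity (q ^ 2) (if odd d then d else d div 2)"
proof (rule primitive_root_of_unityI)
  show "0 < (if odd d then d else d div 2)"
    using assms by (auto simp: primitive_root_of_unity_def elim: evenE)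
  fix k
  have "(q ^ 2) ^ k = 1 \<longleftrightarrow> d dvd 2 * k"
    by (metis power_mult primitive_root_of_unity_power_eq_1_iff[OF assms])
  also have "\<dots> \<longleftrightarrow> (if odd d then d else d div 2) dvd k"
  proof (cases "odd d")
    case True
    then show ?thesis
      by (simp add: coprime_dvd_mult_right_iff)
  next
    case False
    then obtain m where "d = 2 * m"
      by blast
    then show ?thesis
      by simp
  qed
  finally show "(q ^ 2) ^ k = 1 \<longleftrightarrow> (if odd d then d else d div 2) dvd k" .
qed

lemma primitive_root_of_unity_nonzero:
  "primitive_root_of_unity (w::'a::field) n \<Longrightarrow> w \<noteq> 0"
  by (auto simp: primitive_root_of_unity_def power_0_left)

lemma primitive_root_of_unity_inverse:
  "primitive_root_of_unity (w::'a::field) n \<Longrightarrow> primitive_root_of_unity (inverse w) n"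
  by (auto simp: primitive_root_of_unity_def power_inverse)

lemma primitive_root_of_unity_power_inj:
  assumes "primitive_root_of_unity (w::'a::field) n"
  shows "inj_on (\<lambda>i. w ^ i) {..<n}"
proof (rule linorder_inj_onI')
  fix i j assume "i \<in> {..<n}" "j \<in> {..<n}" "i < j"
  have "w ^ j = w ^ (j - i) * w ^ i"
    using \<open>i < j\<close> by (simp flip: power_add)
  moreover have "w ^ (j - i) \<noteq> 1"
    using \<open>i < j\<close> \<open>j \<in> {..<n}\<close> primitive_root_of_unity_power_eq_1_iff[OF assms]
    by (auto dest: dvd_imp_le)
  ultimately show "w ^ i \<noteq> w ^ j"
    using primitive_root_of_unity_nonzero[OF assms] by auto
qed

lemma primitive_root_of_unity_diff_inverse_nonzero:
  assumes "primitive_root_of_unity (w::'a::field) n" and "3 \<le> n"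
  shows "w - inverse w \<noteq> 0"
proof
  assume "w - inverse w = 0"
  then have "w ^ 2 = 1"
    using primitive_root_of_unity_nonzero[OF assms(1)] by (simp add: power2_eq_square field_simps)
  then show False
    using primitive_root_of_unity_power_eq_1_iff[OF assms(1), of 2] assms(2) by (auto dest: dvd_imp_le)
qed

lemma prod_diff_powers_primitive_root:
  fixes w z :: "'a::field"
  assumes "primitive_root_of_unity w n"
  shows "(\<Prod>i<n. z - w ^ i) = z ^ n - 1"
proof -
  have n: "0 < n" and wn: "w ^ n = 1"
    using assms by (auto simp: primitive_root_of_unity_def)
  have deg: "degree (\<Prod>i<n. [:- (w ^ i), 1:]) = n"
    by (subst degree_prod_eq_sum_degree) auto
  have "(\<Prod>i<n. [:- (w ^ i), 1:]) = monom 1 n - 1"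
  proof (rule poly_eqI_degree_lead_coeff[where A = "(\<lambda>i. w ^ i) ` {..<n}"])
    have "lead_coeff (\<Prod>i<n. [:- (w ^ i), 1:]) = 1"
      by (simp add: lead_coeff_prod)
    then show "coeff (\<Prod>i<n. [:- (w ^ i), 1:]) n = coeff (monom 1 n - 1) n"
      using n deg by simp
    show "n \<le> card ((\<lambda>i. w ^ i) ` {..<n})"
      by (simp add: card_image primitive_root_of_unity_power_inj[OF assms])
    show "degree (monom 1 n - 1 :: 'a poly) \<le> n"
      by (intro degree_diff_le) (simp_all add: degree_monom_le)
    show "degree (\<Prod>i<n. [:- (w ^ i), 1:]) \<le> n"
      using deg by simp
    fix x assume "x \<in> (\<lambda>i. w ^ i) ` {..<n}"
    then obtain j where "j < n" "x = w ^ j"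
      by auto
    then have "poly (\<Prod>i<n. [:- (w ^ i), 1:]) x = 0"
      unfolding poly_prod by (intro prod_zero) auto
    moreover have "x ^ n = 1"
      using \<open>x = w ^ j\<close> wn by (metis mult.commute power_mult power_one)
    ultimately show "poly (\<Prod>i<n. [:- (w ^ i), 1:]) x = poly (monom 1 n - 1) x"
      by (simp add: poly_monom)
  qed
  then have "poly (\<Prod>i<n. [:- (w ^ i), 1:]) z = poly (monom 1 n - 1) z"
    by simp
  then show ?thesis
    by (simp add: poly_prod poly_monom)
qed

lemma prod_diff_mult_powers_primitive_root:
  fixes w a b :: "'a::field"
  assumes "primitive_root_of_unity w n"
  shows "(\<Prod>i<n. a - b * w ^ i) = a ^ n - b ^ n"
proof (cases "b = 0")
  case True
  then show ?thesis
    using assms by (simp add: primitive_root_of_unity_def)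
next
  case False
  have "(\<Prod>i<n. a - b * w ^ i) = (\<Prod>i<n. b * (a / b - w ^ i))"
    using False by (intro prod.cong) (auto simp: field_simps)
  also have "\<dots> = b ^ n * ((a / b) ^ n - 1)"
    by (simp add: prod.distrib prod_diff_powers_primitive_root[OF assms])
  also have "\<dots> = a ^ n - b ^ n"
    using False by (simp add: power_divide right_diff_distrib)
  finally show ?thesis .
qed

lemma joukowski_diff:
  fixes x z :: "'a::field"
  assumes "x \<noteq> 0" "z \<noteq> 0"
  shows "joukowski x - joukowski z = (x - z) * (1 - inverse (x * z))"
  using assms by (simp add: joukowski_def field_simps)

lemma prod_joukowski_diff_primitive_root:
  fixes w x \<mu> :: "'a::field"
  assumes w: "primitive_root_of_unity w n" and "x \<noteq> 0" "\<mu> \<noteq> 0"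
  shows "(\<Prod>i<n. joukowski x - joukowski (\<mu> * w ^ i)) = joukowski (x ^ n) - joukowski (\<mu> ^ n)"
proof -
  have "w \<noteq> 0"
    using w by (rule primitive_root_of_unity_nonzero)
  then have "(\<Prod>i<n. joukowski x - joukowski (\<mu> * w ^ i))
      = (\<Prod>i<n. (x - \<mu> * w ^ i) * (1 - inverse (x * \<mu>) * inverse w ^ i))"
    using assms by (intro prod.cong) (simp_all add: joukowski_diff power_inverse mult.assoc)
  also have "\<dots> = (\<Prod>i<n. x - \<mu> * w ^ i) * (\<Prod>i<n. 1 - inverse (x * \<mu>) * inverse w ^ i)"
    by (rule prod.distrib)
  also have "\<dots> = (x ^ n - \<mu> ^ n) * (1 - inverse (x * \<mu>) ^ n)"
    by (simp only: prod_diff_mult_powers_primitive_root[OF w]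
        prod_diff_mult_powers_primitive_root[OF primitive_root_of_unity_inverse[OF w]] power_one)
  also have "\<dots> = (x ^ n - \<mu> ^ n) * (1 - inverse (x ^ n * \<mu> ^ n))"
    by (simp only: power_mult_distrib power_inverse)
  also have "\<dots> = joukowski (x ^ n) - joukowski (\<mu> ^ n)"
    using assms by (simp add: joukowski_diff)
  finally show ?thesis .
qed

lemma prod_lessThan_pair_split:
  fixes f :: "nat \<Rightarrow> 'a::comm_monoid_mult"
  assumes "0 < n"
  shows "(\<Prod>i<n. f i) = f 0 * (\<Prod>k\<in>{1..(n - 1) div 2}. f k * f (n - k))
           * (if even n then f (n div 2) else 1)"
proof -
  define m where "m = (n - 1) div 2"
  have bounds: "1 \<le> m + 1" "m + 1 \<le> n - m" "n - m \<le> n"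
    using assms by (auto simp: m_def)
  have "(\<Prod>i<n. f i) = f 0 * prod f {1..<n}"
    using assms by (simp add: prod.atLeast_Suc_lessThan lessThan_atLeast0)
  also have "prod f {1..<n} = prod f {1..<m + 1} * prod f {m + 1..<n - m} * prod f {n - m..<n}"
    using bounds by (simp only: prod.atLeastLessThan_concat)
  also have "prod f {1..<m + 1} = prod f {1..m}"
    by (simp add: atLeastLessThanSuc_atLeastAtMost)
  also have "prod f {n - m..<n} = (\<Prod>k\<in>{1..m}. f (n - k))"
    by (rule prod.reindex_bij_witness[where i = "\<lambda>k. n - k" and j = "\<lambda>i. n - i"])
       (use assms in \<open>auto simp: m_def\<close>)
  also have "prod f {m + 1..<n - m} = (if even n then f (n div 2) else 1)"
  proof (cases "even n")
    case True
    then have "n - m = Suc (m + 1)" and "n div 2 = m + 1"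
      using assms unfolding m_def by presburger+
    then show ?thesis
      using True by simp
  next
    case False
    then have "n - m = m + 1"
      using assms unfolding m_def by presburger
    then show ?thesis
      using False by simp
  qed
  finally show ?thesis
    by (simp add: m_def prod.distrib mult_ac)
qed

lemma joukowski_minus: "joukowski (- x) = - joukowski x"
  by (simp add: joukowski_def)

lemma joukowski_pair:
  fixes y c l :: "'a::field"
  assumes "y \<noteq> 0" "c \<noteq> 0"
  shows "(l - joukowski (y * c)) * (l - joukowski (y * inverse c))
       = l ^ 2 + joukowski y ^ 2 - joukowski c * l * joukowski y + joukowski c ^ 2 - 4"
  using assms by (simp add: joukowski_def field_simps power2_eq_square)

lemma prod_joukowski_orbit_pairs:
  fixes w y l :: "'a::field"
  assumes w: "primitive_root_of_unity w n" and "y \<noteq> 0"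
  shows "(\<Prod>i<n. l - joukowski (y * w ^ i))
       = (l - joukowski y)
         * (\<Prod>k\<in>{1..(n - 1) div 2}. (l - joukowski (y * w ^ k)) * (l - joukowski (y * inverse (w ^ k))))
         * (if even n then l + joukowski y else 1)"
proof -
  have n: "0 < n" and wn: "w ^ n = 1"
    using w by (simp_all add: primitive_root_of_unity_def)
  have w0: "w \<noteq> 0"
    using w by (rule primitive_root_of_unity_nonzero)
  define f where "f i = l - joukowski (y * w ^ i)" for i
  have "f (n - k) = l - joukowski (y * inverse (w ^ k))" if "k \<le> n" for k
  proof -
    have "w ^ (n - k) * w ^ k = 1"
      using that wn by (simp flip: power_add)
    then have "w ^ (n - k) = inverse (w ^ k)"
      using w0 by (simp add: field_simps)
    then show ?thesis
      by (simp add: f_def)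
  qed
  then have pairs: "(\<Prod>k\<in>{1..(n - 1) div 2}. f k * f (n - k))
      = (\<Prod>k\<in>{1..(n - 1) div 2}. (l - joukowski (y * w ^ k)) * (l - joukowski (y * inverse (w ^ k))))"
    by (intro prod.cong) (auto simp: f_def)
  have "f (n div 2) = l + joukowski y" if "even n"
  proof -
    have "(w ^ (n div 2)) ^ 2 = 1"
      using that wn by (simp flip: power_mult)
    moreover have "0 < n div 2" "n div 2 < n"
      using n that by auto
    then have "w ^ (n div 2) \<noteq> 1"
      using w by (simp add: primitive_root_of_unity_def)
    ultimately have "w ^ (n div 2) = -1"
      by (simp add: power2_eq_1_iff)
    then show ?thesis
      by (simp add: f_def joukowski_minus)
  qed
  then show ?thesis
    using prod_lessThan_pair_split[OF n, of f] pairs by (simp add: f_def cong: if_cong)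
qed

lemma alg_closed_infinite:
  assumes "alg_closed TYPE('a::field)"
  shows "infinite (UNIV :: 'a set)"
proof
  assume fin: "finite (UNIV :: 'a set)"
  define vanishing :: "'a poly" where "vanishing = (\<Prod>a\<in>UNIV. [:- a, 1:])"
  have "degree vanishing = card (UNIV :: 'a set)"
    unfolding vanishing_def by (subst degree_prod_eq_sum_degree) auto
  then have "degree (vanishing + 1) > 0"
    using fin by (subst degree_add_eq_left) (auto simp: finite_UNIV_card_ge_0)
  then obtain x where "poly (vanishing + 1) x = 0"
    using assms unfolding alg_closed_def by blast
  moreover have "poly vanishing x = 0"
    using fin unfolding vanishing_def poly_prod by (intro prod_zero) auto
  ultimately show False
    by simp
qed

lemma alg_closed_joukowski_surj:
  assumes "alg_closed TYPE('a::field)"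
  shows "\<exists>x. x \<noteq> 0 \<and> joukowski x = (t::'a)"
proof -
  have "degree [:1, - t, 1:] > 0"
    by simp
  then obtain x where x: "poly [:1, - t, 1:] x = 0"
    using assms unfolding alg_closed_def by blast
  then have "x \<noteq> 0"
    by auto
  moreover have "x * (joukowski x - t) = 0"
    using x \<open>x \<noteq> 0\<close> by (simp add: joukowski_def field_simps)
  ultimately show ?thesis
    by auto
qed

section \<open>Bivariate polynomials\<close>

lemma poly_eq_0_if_infinite:
  fixes p :: "'a::idom poly"
  assumes "infinite (UNIV :: 'a set)" and "\<And>x. poly p x = 0"
  shows "p = 0"
  using assms poly_roots_finite[of p] by auto

definition poly2 :: "'a::comm_semiring_0 poly poly \<Rightarrow> 'a \<Rightarrow> 'a \<Rightarrow> 'a" where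
  "poly2 p x y = poly (poly p [:x:]) y"

definition var_l :: "'a::comm_semiring_1 poly poly" where
  "var_l = [:0, 1:]"

definition var_r :: "'a::comm_semiring_1 poly poly" where
  "var_r = [:[:0, 1:]:]"

definition lift_left :: "'a::zero poly \<Rightarrow> 'a poly poly" where
  "lift_left p = map_poly (\<lambda>a. [:a:]) p"

lemma poly2_add [simp]: "poly2 (p + q) x y = poly2 p x y + poly2 q x y"
  by (simp add: poly2_def)

lemma poly2_diff [simp]: "poly2 (p - q) x y = poly2 p x y - poly2 q x y"
  for p q :: "'a::comm_ring poly poly"
  by (simp add: poly2_def)

lemma poly2_mult [simp]: "poly2 (p * q) x y = poly2 p x y * poly2 q x y"
  by (simp add: poly2_def)

lemma poly2_smult [simp]: "poly2 (smult a p) x y = poly a y * poly2 p x y"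
  by (simp add: poly2_def)

lemma poly2_power [simp]: "poly2 (p ^ k) x y = poly2 p x y ^ k"
  for p :: "'a::comm_semiring_1 poly poly"
  by (simp add: poly2_def)

lemma poly2_1 [simp]: "poly2 1 x y = (1::'a::comm_semiring_1)"
  by (simp add: poly2_def)

lemma poly2_prod [simp]: "poly2 (\<Prod>i\<in>A. p i) x y = (\<Prod>i\<in>A. poly2 (p i) x y)"
  by (simp add: poly2_def poly_prod)

lemma poly2_lift_right [simp]: "poly2 [:p:] x y = poly p y"
  by (simp add: poly2_def)

lemma poly2_var_l [simp]: "poly2 var_l x y = x"
  by (simp add: poly2_def var_l_def)

lemma poly2_var_r [simp]: "poly2 var_r x y = y"
  by (simp add: poly2_def var_r_def)

lemma poly2_lift_left [simp]: "poly2 (lift_left p) x y = poly p x"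
  by (induction p) (simp_all add: poly2_def lift_left_def map_poly_pCons)

lemma poly2_eq_poly_map_poly: "poly2 p x y = poly (map_poly (\<lambda>c. poly c y) p) x"
  by (induction p) (simp_all add: poly2_def map_poly_pCons)

lemma poly2_eqI:
  fixes p q :: "'a::idom poly poly"
  assumes "infinite (UNIV :: 'a set)" and "\<And>x y. poly2 p x y = poly2 q x y"
  shows "p = q"
proof -
  have "map_poly (\<lambda>c. poly c y) (p - q) = 0" for y
    using assms by (intro poly_eq_0_if_infinite) (simp_all flip: poly2_eq_poly_map_poly)
  then have "poly (coeff (p - q) i) y = 0" for i y
    by (metis coeff_0 coeff_map_poly poly_0)
  then have "coeff (p - q) i = 0" for i
    using assms(1) by (intro poly_eq_0_if_infinite) auto
  then show ?thesis
    by (simp add: poly_eq_iff)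
qed

definition pair_poly :: "'a::field \<Rightarrow> 'a poly poly" where
  "pair_poly c = var_l ^ 2 + var_r ^ 2 - [:[:joukowski c:]:] * var_l * var_r
                 + [:[:joukowski c ^ 2 - 4:]:]"

lemma poly2_pair_poly_joukowski:
  assumes "y \<noteq> 0" "c \<noteq> 0"
  shows "poly2 (pair_poly c) l (joukowski y)
       = (l - joukowski (y * c)) * (l - joukowski (y * inverse c))"
  using assms by (simp add: pair_poly_def joukowski_pair)

lemma lift_left_diff_factorization:
  fixes w \<mu> :: "'a::field"
  assumes alg_closed: "alg_closed TYPE('a)" and w: "primitive_root_of_unity w n" and "\<mu> \<noteq> 0"
  defines "F \<equiv> \<Prod>i<n. [:- joukowski (\<mu> * w ^ i), 1:]"
  shows "lift_left F - [:F:]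
       = (var_l - var_r) * (\<Prod>k\<in>{1..(n - 1) div 2}. pair_poly (w ^ k))
         * (if even n then var_l + var_r else 1)" (is "?L = ?R")
proof (rule poly2_eqI[OF alg_closed_infinite[OF alg_closed]])
  fix l r :: 'a
  obtain x y where "x \<noteq> 0" "joukowski x = l" "y \<noteq> 0" "joukowski y = r"
    using alg_closed_joukowski_surj[OF alg_closed] by metis
  have poly_F: "poly F (joukowski z) = joukowski (z ^ n) - joukowski (\<mu> ^ n)" if "z \<noteq> 0" for z
    using prod_joukowski_diff_primitive_root[OF w that \<open>\<mu> \<noteq> 0\<close>] by (simp add: F_def poly_prod)
  have "poly2 ?L l r = joukowski (x ^ n) - joukowski (y ^ n)"
    using \<open>x \<noteq> 0\<close> \<open>y \<noteq> 0\<close> by (simp flip: \<open>joukowski x = l\<close> \<open>joukowski y = r\<close> add: poly_F)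
  also have "\<dots> = (\<Prod>i<n. l - joukowski (y * w ^ i))"
    using prod_joukowski_diff_primitive_root[OF w \<open>x \<noteq> 0\<close> \<open>y \<noteq> 0\<close>] \<open>joukowski x = l\<close> by simp
  also have "\<dots> = poly2 ?R l r"
    using \<open>y \<noteq> 0\<close> primitive_root_of_unity_nonzero[OF w]
    by (simp add: prod_joukowski_orbit_pairs[OF w] poly2_pair_poly_joukowski
        flip: \<open>joukowski y = r\<close>)
  finally show "poly2 ?L l r = poly2 ?R l r" .
qed

lemma pair_poly_dvd_lift_left_diff:
  fixes w \<mu> :: "'a::field"
  assumes "alg_closed TYPE('a)" and "primitive_root_of_unity w n" and "\<mu> \<noteq> 0" and "3 \<le> n"
  defines "F \<equiv> \<Prod>i<n. [:- joukowski (\<mu> * w ^ i), 1:]"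
  shows "(var_l - var_r) * pair_poly w dvd lift_left F - [:F:]"
proof -
  have "pair_poly w dvd (\<Prod>k\<in>{1..(n - 1) div 2}. pair_poly (w ^ k))"
    using dvd_prodI[of "{1..(n - 1) div 2}" 1 "\<lambda>k. pair_poly (w ^ k)"] \<open>3 \<le> n\<close> by simp
  then show ?thesis
    unfolding F_def lift_left_diff_factorization[OF assms(1-3)]
    by (intro dvd_mult2 mult_dvd_mono dvd_refl)
qed

definition qcomm_left :: "'a::field \<Rightarrow> 'a poly poly" where
  "qcomm_left q = smult [:q:] var_l - smult [:inverse q:] var_r"

definition qcomm_right :: "'a::field \<Rightarrow> 'a poly poly" where
  "qcomm_right q = smult [:q:] var_r - smult [:inverse q:] var_l"

lemma pair_poly_square_eq:
  fixes q :: "'a::field"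
  assumes "q \<noteq> 0"
  shows "pair_poly (q ^ 2) = [:[:(q ^ 2 - inverse (q ^ 2)) ^ 2:]:] - qcomm_right q * qcomm_left q"
proof -
  define u where "u = [:[:q:]:]"
  define v where "v = [:[:inverse q:]:]"
  have smult_eq: "smult [:a:] p = [:[:a:]:] * p" for a :: 'a and p
    by simp
  have uv: "u * v = 1"
    using assms by (simp add: u_def v_def one_pCons)
  have jouk: "[:[:joukowski (q ^ 2):]:] = u * u + v * v"
    by (simp add: u_def v_def joukowski_def power2_eq_square power_inverse)
  have jouk_sq: "[:[:joukowski (q ^ 2) ^ 2 - 4:]:] = (u * u - v * v) ^ 2"
    using assms by (simp add: u_def v_def joukowski_def power2_eq_square field_simps)
  have e_sq: "[:[:(q ^ 2 - inverse (q ^ 2)) ^ 2:]:] = (u * u - v * v) ^ 2"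
    by (simp add: u_def v_def power2_eq_square power_inverse)
  show ?thesis
    unfolding pair_poly_def qcomm_left_def qcomm_right_def smult_eq jouk jouk_sq e_sq
      u_def[symmetric] v_def[symmetric]
    using uv by algebra
qed

section \<open>Polynomials acting on an algebra by left and right multiplication\<close>

lemma gen_alg_rotate: "gen_alg emb b c a = gen_alg emb a b c"
proof -
  have "x \<in> gen_alg emb a b c \<Longrightarrow> x \<in> gen_alg emb b c a" for emb a b c and x :: "'r::ring_1"
    by (induction rule: gen_alg.induct) (auto intro: gen_alg.intros)
  then show ?thesis
    by blast
qed

locale algebra_embedding =
  fixes emb :: "'f::field \<Rightarrow> 'r::ring_1"
  assumes alg_emb: "alg_emb emb"
begin

lemma emb_add: "emb (x + y) = emb x + emb y"
  using alg_emb unfolding alg_emb_def by blast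

lemma emb_mult: "emb (x * y) = emb x * emb y"
  using alg_emb unfolding alg_emb_def by blast

lemma emb_1 [simp]: "emb 1 = 1"
  using alg_emb unfolding alg_emb_def by blast

lemma emb_commute: "emb x * r = r * emb x"
  using alg_emb unfolding alg_emb_def by blast

lemma emb_0 [simp]: "emb 0 = 0"
  using emb_add[of 0 0] by simp

lemma emb_uminus: "emb (- x) = - emb x"
proof -
  have "emb x + emb (- x) = 0"
    by (simp flip: emb_add)
  then show ?thesis
    by (simp add: minus_unique)
qed

definition aeval :: "'r \<Rightarrow> 'f poly \<Rightarrow> 'r" where
  "aeval A p = fold_coeffs (\<lambda>c s. emb c + s * A) p 0"

lemma aeval_0 [simp]: "aeval A 0 = 0"
  by (simp add: aeval_def)

lemma aeval_pCons [simp]: "aeval A (pCons c p) = emb c + aeval A p * A"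
  by (cases "c = 0 \<and> p = 0") (auto simp: aeval_def)

lemma aeval_1 [simp]: "aeval A 1 = 1"
  by (simp add: one_pCons)

lemma aeval_linear: "aeval A [:- c, 1:] = A - emb c"
  by (simp add: emb_uminus)

lemma aeval_add: "aeval A (p + q) = aeval A p + aeval A q"
  by (induction p q rule: poly_induct2) (simp_all add: emb_add distrib_right add_ac)

lemma aeval_smult: "aeval A (smult c p) = emb c * aeval A p"
  by (induction p) (simp_all add: emb_mult distrib_left mult.assoc)

lemma aeval_commute: "aeval A p * A = A * aeval A p"
proof (induction p)
  case (pCons c p)
  have "(emb c + aeval A p * A) * A = emb c * A + (aeval A p * A) * A"
    by (rule distrib_right)
  also have "\<dots> = A * emb c + (A * aeval A p) * A"
    by (simp only: emb_commute pCons.IH)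
  also have "\<dots> = A * (emb c + aeval A p * A)"
    by (simp only: distrib_left mult.assoc)
  finally show ?case
    by simp
qed simp

lemma aeval_mult: "aeval A (p * q) = aeval A p * aeval A q"
proof (induction p)
  case (pCons c p)
  have "aeval A (pCons c p * q) = emb c * aeval A q + aeval A p * (aeval A q * A)"
    by (simp add: aeval_add aeval_smult pCons.IH mult.assoc)
  also have "\<dots> = (emb c + aeval A p * A) * aeval A q"
    by (simp only: aeval_commute[of A q] distrib_right mult.assoc)
  also have "\<dots> = aeval A (pCons c p) * aeval A q"
    by simp
  finally show ?case .
qed simp

lemma aeval_mult_commute: "aeval A p * aeval A q = aeval A q * aeval A p"
  by (metis aeval_mult mult.commute)

lemma aeval_prod_lessThan:
  "aeval A (\<Prod>i<n. p i) = prod_list (map (\<lambda>i. aeval A (p i)) [0..<n])"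
  by (induction n) (simp_all add: aeval_mult)

text \<open>\<open>lr_act A p X\<close> is \<open>p(L, R) X\<close>, where the outer variable of \<open>p\<close> acts as left
  multiplication \<open>L\<close> by \<open>A\<close> and the variable of its coefficients as right multiplication \<open>R\<close>.\<close>

definition lr_act :: "'r \<Rightarrow> 'f poly poly \<Rightarrow> 'r \<Rightarrow> 'r" where
  "lr_act A p X = fold_coeffs (\<lambda>a s. X * aeval A a + A * s) p 0"

lemma lr_act_0 [simp]: "lr_act A 0 X = 0"
  by (simp add: lr_act_def)

lemma lr_act_pCons [simp]: "lr_act A (pCons a p) X = X * aeval A a + A * lr_act A p X"
  by (cases "a = 0 \<and> p = 0") (auto simp: lr_act_def)

lemma lr_act_add: "lr_act A (p + q) X = lr_act A p X + lr_act A q X"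
  by (induction p q rule: poly_induct2) (simp_all add: aeval_add distrib_left add_ac)

lemma lr_act_diff: "lr_act A (p - q) X = lr_act A p X - lr_act A q X"
  using lr_act_add[of A "p - q" q X] by (simp add: eq_diff_eq)

lemma lr_act_smult: "lr_act A (smult a p) X = lr_act A p X * aeval A a"
proof (induction p)
  case (pCons b p)
  have "aeval A (a * b) = aeval A b * aeval A a"
    by (simp add: aeval_mult aeval_mult_commute)
  then show ?case
    by (simp add: pCons.IH distrib_right mult.assoc)
qed simp

lemma lr_act_mult: "lr_act A (p * q) X = lr_act A p (lr_act A q X)"
  by (induction p) (simp_all add: lr_act_add lr_act_smult)

lemma lr_act_commute: "lr_act A p (lr_act A q X) = lr_act A q (lr_act A p X)"
  by (metis lr_act_mult mult.commute)

lemma lr_act_lift_right: "lr_act A [:p:] X = X * aeval A p"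
  by simp

lemma lr_act_const [simp]: "lr_act A [:[:c:]:] X = emb c * X"
  by (simp add: emb_commute)

lemma lr_act_var_l [simp]: "lr_act A var_l X = A * X"
  by (simp add: var_l_def)

lemma lr_act_var_r [simp]: "lr_act A var_r X = X * A"
  by (simp add: var_r_def)

lemma lr_act_lift_left: "lr_act A (lift_left p) X = aeval A p * X"
proof (induction p)
  case (pCons c p)
  have "X * emb c + A * (aeval A p * X) = (emb c + aeval A p * A) * X"
    by (simp add: emb_commute aeval_commute distrib_right mult.assoc)
  then show ?case
    using pCons.IH by (simp add: lift_left_def map_poly_pCons)
qed (simp add: lift_left_def)

lemma lr_act_diff_right: "lr_act A p (X - Y) = lr_act A p X - lr_act A p Y"
  by (induction p) (simp_all add: left_diff_distrib right_diff_distrib)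

lemma lr_act_emb_right: "lr_act A p (emb c * X) = emb c * lr_act A p X"
  using lr_act_commute[of A p "[:[:c:]:]" X] by (simp only: lr_act_const)

lemma lr_act_commutator: "lr_act A (var_l - var_r) X = A * X - X * A"
  by (simp add: lr_act_diff)

lemma lr_act_zero_right [simp]: "lr_act A p 0 = 0"
  by (induction p) simp_all

lemma aeval_commute_if_annihilated:
  assumes "d dvd lift_left f - [:f:]" and "lr_act A d X = 0"
  shows "aeval A f * X = X * aeval A f"
proof -
  from assms(1) obtain s where s: "lift_left f - [:f:] = d * s"
    by (rule dvdE)
  have "aeval A f * X - X * aeval A f = lr_act A (lift_left f - [:f:]) X"
    by (simp add: lr_act_diff lr_act_lift_left lr_act_lift_right)
  also have "\<dots> = 0"
    using assms(2) by (simp add: s lr_act_mult lr_act_commute[of A d s X])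
  finally show ?thesis
    by simp
qed

lemma lr_act_qcomm_left: "lr_act A (qcomm_left q) X = emb q * A * X - emb (inverse q) * X * A"
  by (simp add: qcomm_left_def lr_act_diff lr_act_smult mult.assoc
      emb_commute[of q "A * X"] emb_commute[of "inverse q" "X * A"])

lemma lr_act_qcomm_right: "lr_act A (qcomm_right q) X = emb q * X * A - emb (inverse q) * A * X"
  by (simp add: qcomm_right_def lr_act_diff lr_act_smult mult.assoc
      emb_commute[of q "X * A"] emb_commute[of "inverse q" "A * X"])

text \<open>Read \<open>T\<close> and \<open>S\<close> as operators: the hypotheses say \<open>S X = e (\<eta> - Y)\<close> and
  \<open>T Y = e (\<xi> - X)\<close>, so \<open>(e\<^sup>2 - T S) X = e\<^sup>2 \<xi> - e T \<eta>\<close>, which \<open>L - R\<close> kills since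
  it commutes with \<open>T\<close> and kills \<open>\<xi>\<close> and \<open>\<eta>\<close>.\<close>

lemma lr_act_quadratic_eq_0:
  assumes ek: "e * k = 1"
    and \<xi>: "\<xi> = X + emb k * lr_act A T Y" and \<eta>: "\<eta> = Y + emb k * lr_act A S X"
    and "A * \<xi> = \<xi> * A" and "A * \<eta> = \<eta> * A"
  shows "lr_act A ((var_l - var_r) * ([:[:e ^ 2:]:] - T * S)) X = 0"
proof -
  let ?D = "var_l - var_r"
  have D\<xi>: "lr_act A ?D \<xi> = 0" and D\<eta>: "lr_act A ?D \<eta> = 0"
    using assms(4,5) by (simp_all add: lr_act_commutator)
  have emb_ek: "emb e * (emb k * Z) = Z" for Z
    using ek by (simp add: mult.assoc[symmetric] flip: emb_mult)
  have SX: "lr_act A S X = emb e * (\<eta> - Y)"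
    using \<eta> by (simp add: emb_ek)
  have TY: "lr_act A T Y = emb e * (\<xi> - X)"
    using \<xi> by (simp add: emb_ek)
  have "lr_act A (?D * ([:[:e ^ 2:]:] - T * S)) X
      = emb (e ^ 2) * lr_act A ?D X - lr_act A ?D (lr_act A T (lr_act A S X))"
    by (simp only: right_diff_distrib lr_act_diff lr_act_mult lr_act_const lr_act_emb_right)
  also have "\<dots> = emb (e ^ 2) * lr_act A ?D X - emb e * lr_act A T (lr_act A ?D \<eta>)
      + emb e * lr_act A ?D (lr_act A T Y)"
    by (simp add: SX lr_act_emb_right lr_act_diff_right right_diff_distrib lr_act_commute[of A ?D T \<eta>])
  also have "\<dots> = emb (e ^ 2) * lr_act A ?D X + emb e * emb e * (lr_act A ?D \<xi> - lr_act A ?D X)"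
    by (simp add: D\<eta> TY lr_act_emb_right lr_act_diff_right mult.assoc)
  also have "\<dots> = 0"
    by (simp add: D\<xi> power2_eq_square emb_mult)
  finally show ?thesis .
qed

lemma central_in_gen_algI:
  assumes "x * a = a * x" and "x * b = b * x" and "x * c = c * x"
  shows "central_in (gen_alg emb a b c) x"
  unfolding central_in_def
proof
  fix y assume "y \<in> gen_alg emb a b c"
  then show "x * y = y * x"
  proof (induction rule: gen_alg.induct)
    case (scal t)
    then show ?case by (simp add: emb_commute)
  next
    case (mult y z)
    then show ?case by (metis mult.assoc)
  qed (use assms in \<open>simp_all add: algebra_simps\<close>)
qed

lemma lr_act_pair_poly_eq_0:
  fixes q :: 'f and A B C \<beta> \<gamma> :: 'r
  assumes "q \<noteq> 0" and "q ^ 2 - inverse (q ^ 2) \<noteq> 0"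
    and \<beta>: "\<beta> = B + emb (inverse (q^2 - inverse (q^2))) * (emb q * C * A - emb (inverse q) * A * C)"
    and \<gamma>: "\<gamma> = C + emb (inverse (q^2 - inverse (q^2))) * (emb q * A * B - emb (inverse q) * B * A)"
    and "A * \<beta> = \<beta> * A" and "A * \<gamma> = \<gamma> * A"
  shows "lr_act A ((var_l - var_r) * pair_poly (q ^ 2)) B = 0"
    and "lr_act A ((var_l - var_r) * pair_poly (q ^ 2)) C = 0"
proof -
  define e where "e = q ^ 2 - inverse (q ^ 2)"
  have ek: "e * inverse e = 1"
    using assms(2) by (simp add: e_def)
  have \<beta>': "\<beta> = B + emb (inverse e) * lr_act A (qcomm_right q) C"
    and \<gamma>': "\<gamma> = C + emb (inverse e) * lr_act A (qcomm_left q) B"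
    using \<beta> \<gamma> by (simp_all add: e_def lr_act_qcomm_left lr_act_qcomm_right)
  have pair: "pair_poly (q ^ 2) = [:[:e ^ 2:]:] - qcomm_right q * qcomm_left q"
    unfolding e_def using \<open>q \<noteq> 0\<close> by (rule pair_poly_square_eq)
  show "lr_act A ((var_l - var_r) * pair_poly (q ^ 2)) B = 0"
    unfolding pair using ek \<beta>' \<gamma>' assms(5,6) by (rule lr_act_quadratic_eq_0)
  show "lr_act A ((var_l - var_r) * pair_poly (q ^ 2)) C = 0"
    unfolding pair mult.commute[of "qcomm_right q"] using ek \<gamma>' \<beta>' assms(6,5)
    by (rule lr_act_quadratic_eq_0)
qed

lemma central_in_joukowski_product:
  fixes q \<mu> :: 'f and A B C :: 'r
  assumes alg_closed: "alg_closed TYPE('f)"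
    and w: "primitive_root_of_unity (q ^ 2) n" and "3 \<le> n" and "\<mu> \<noteq> 0"
    and central_B: "central_in (gen_alg emb A B C)
      (B + emb (inverse (q^2 - inverse (q^2))) * (emb q * C * A - emb (inverse q) * A * C))"
    and central_C: "central_in (gen_alg emb A B C)
      (C + emb (inverse (q^2 - inverse (q^2))) * (emb q * A * B - emb (inverse q) * B * A))"
  shows "central_in (gen_alg emb A B C)
    (prod_list (map (\<lambda>i. A - emb (\<mu> * q ^ (2*i) + inverse \<mu> * inverse (q ^ (2*i)))) [0..<n]))"
proof -
  define \<beta> where "\<beta> = B + emb (inverse (q^2 - inverse (q^2))) * (emb q * C * A - emb (inverse q) * A * C)"
  define \<gamma> where "\<gamma> = C + emb (inverse (q^2 - inverse (q^2))) * (emb q * A * B - emb (inverse q) * B * A)"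
  define F where "F = (\<Prod>i<n. [:- joukowski (\<mu> * (q ^ 2) ^ i), 1:])"
  have "q \<noteq> 0"
    using primitive_root_of_unity_nonzero[OF w] by simp
  have "A \<in> gen_alg emb A B C"
    by (rule gen_alg.gen_a)
  then have "A * \<beta> = \<beta> * A" and "A * \<gamma> = \<gamma> * A"
    using central_B central_C unfolding central_in_def \<beta>_def[symmetric] \<gamma>_def[symmetric] by auto
  then have "lr_act A ((var_l - var_r) * pair_poly (q ^ 2)) B = 0"
    and "lr_act A ((var_l - var_r) * pair_poly (q ^ 2)) C = 0"
    using lr_act_pair_poly_eq_0[OF \<open>q \<noteq> 0\<close> primitive_root_of_unity_diff_inverse_nonzero[OF w \<open>3 \<le> n\<close>]
        \<beta>_def \<gamma>_def] by simp_all
  moreover have "(var_l - var_r) * pair_poly (q ^ 2) dvd lift_left F - [:F:]"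
    unfolding F_def using alg_closed w \<open>\<mu> \<noteq> 0\<close> \<open>3 \<le> n\<close> by (rule pair_poly_dvd_lift_left_diff)
  ultimately have "aeval A F * B = B * aeval A F" and "aeval A F * C = C * aeval A F"
    by (simp_all add: aeval_commute_if_annihilated)
  moreover have "aeval A F * A = A * aeval A F"
    by (rule aeval_commute)
  moreover have "aeval A F
      = prod_list (map (\<lambda>i. A - emb (\<mu> * q ^ (2*i) + inverse \<mu> * inverse (q ^ (2*i)))) [0..<n])"
    unfolding F_def aeval_prod_lessThan aeval_linear by (simp add: joukowski_def power_mult)
  ultimately show ?thesis
    by (metis central_in_gen_algI)
qed

end

theorem lemma6p5:
  fixes q \<mu> :: "'f::field" and d :: nat
    and emb :: "'f \<Rightarrow> 'r::ring_1" and A B C :: 'r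
  assumes "alg_closed TYPE('f)"
    and "q \<noteq> 0" and "d > 0" and "q ^ d = 1" and "\<forall>k. 0 < k \<and> k < d \<longrightarrow> q ^ k \<noteq> 1"
    and "d \<notin> {1, 2, 4}"
    and "alg_emb emb"
    and "central_in (gen_alg emb A B C)
           (A + emb (inverse (q^2 - inverse (q^2))) * (emb q * B * C - emb (inverse q) * C * B))"
    and "central_in (gen_alg emb A B C)
           (B + emb (inverse (q^2 - inverse (q^2))) * (emb q * C * A - emb (inverse q) * A * C))"
    and "central_in (gen_alg emb A B C)
           (C + emb (inverse (q^2 - inverse (q^2))) * (emb q * A * B - emb (inverse q) * B * A))"
    and "\<mu> \<noteq> 0"
  shows "let d' = (if odd d then d else d div 2) in
           central_in (gen_alg emb A B C)
             (prod_list (map (\<lambda>i. A - emb (\<mu> * q ^ (2*i) + inverse \<mu> * inverse (q ^ (2*i)))) [0..<d']))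
         \<and> central_in (gen_alg emb A B C)
             (prod_list (map (\<lambda>i. B - emb (\<mu> * q ^ (2*i) + inverse \<mu> * inverse (q ^ (2*i)))) [0..<d']))
         \<and> central_in (gen_alg emb A B C)
             (prod_list (map (\<lambda>i. C - emb (\<mu> * q ^ (2*i) + inverse \<mu> * inverse (q ^ (2*i)))) [0..<d']))"
proof -
  interpret algebra_embedding emb
    using assms(7) by unfold_locales
  define n where "n = (if odd d then d else d div 2)"
  have "primitive_root_of_unity q d"
    using assms(3-5) by (simp add: primitive_root_of_unity_def)
  then have w: "primitive_root_of_unity (q ^ 2) n"
    unfolding n_def by (rule primitive_root_of_unity_square)
  have "3 \<le> n"
    using assms(3,6) unfolding n_def by simp presburger
  note central_product = central_in_joukowski_product[OF assms(1) w \<open>3 \<le> n\<close> assms(11)]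
  have "gen_alg emb B C A = gen_alg emb A B C" and "gen_alg emb C A B = gen_alg emb A B C"
    by (simp_all only: gen_alg_rotate)
  then show ?thesis
    unfolding Let_def n_def[symmetric]
    using central_product[of A B C] central_product[of B C A] central_product[of C A B]
      assms(8-10) by simp
qed

end
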